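(* Let $(G,\cdot)$ be a loop and $(H,\cdot)$ a non-trivial subloop. Then $(xs\cdot z)s=x(sz\cdot s)$ holds for all $x,z\in G$ and $s\in H$ if and only if $(R_s^{-1},L_sR_s,R_s)\in \mathrm{S_{1st}AUT}(G_H)$ for every $s\in H$.
   Context: Juxtaposition binds more tightly than $\cdot$. Maps are written on the right and composed left to right; $xR_s=x\cdot s$, $xL_s=s\cdot x$. $SSYM(G_H)$ is the set of bijections $A$ of $G$ with $HA=H$. $\mathrm{S_{1st}AUT}(G_H)$ is the set of triples $(U,V,W)$ with $U,V,W\in SSYM(G_H)$ and $xU\cdot yV=(x\cdot y)W$ for all $x,y\in G$. *)

theory Defs
  imports Main
begin

definition loop :: "'a set \<Rightarrow> ('a \<Rightarrow> 'a \<Rightarrow> 'a) \<Rightarrow> 'a \<Rightarrow> bool" where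
  "loop G m e \<longleftrightarrow>
     e \<in> G \<and>
     (\<forall>x\<in>G. \<forall>y\<in>G. m x y \<in> G) \<and>
     (\<forall>x\<in>G. m e x = x \<and> m x e = x) \<and>
     (\<forall>a\<in>G. \<forall>b\<in>G. (\<exists>!x. x \<in> G \<and> m a x = b) \<and> (\<exists>!y. y \<in> G \<and> m y a = b))"

definition subloop :: "'a set \<Rightarrow> 'a set \<Rightarrow> ('a \<Rightarrow> 'a \<Rightarrow> 'a) \<Rightarrow> 'a \<Rightarrow> bool" where
  "subloop H G m e \<longleftrightarrow> H \<subseteq> G \<and> loop H m e"

text \<open>SSYM(G_H): bijections A of G with H A = H (maps act on the right, x A = A x).\<close>
definition SSYM :: "'a set \<Rightarrow> 'a set \<Rightarrow> ('a \<Rightarrow> 'a) set" where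
  "SSYM G H = {A. bij_betw A G G \<and> A ` H = H}"

definition S1stAUT :: "'a set \<Rightarrow> 'a set \<Rightarrow> ('a \<Rightarrow> 'a \<Rightarrow> 'a)
    \<Rightarrow> (('a \<Rightarrow> 'a) \<times> ('a \<Rightarrow> 'a) \<times> ('a \<Rightarrow> 'a)) set" where
  "S1stAUT G H m = {(U, V, W). U \<in> SSYM G H \<and> V \<in> SSYM G H \<and> W \<in> SSYM G H \<and>
      (\<forall>x\<in>G. \<forall>y\<in>G. m (U x) (V y) = W (m x y))}"

definition Rt :: "('a \<Rightarrow> 'a \<Rightarrow> 'a) \<Rightarrow> 'a \<Rightarrow> 'a \<Rightarrow> 'a" where
  "Rt m s = (\<lambda>x. m x s)"

definition Lt :: "('a \<Rightarrow> 'a \<Rightarrow> 'a) \<Rightarrow> 'a \<Rightarrow> 'a \<Rightarrow> 'a" where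
  "Lt m s = (\<lambda>x. m s x)"

definition Rt_inv :: "'a set \<Rightarrow> ('a \<Rightarrow> 'a \<Rightarrow> 'a) \<Rightarrow> 'a \<Rightarrow> 'a \<Rightarrow> 'a" where
  "Rt_inv G m s = the_inv_into G (Rt m s)"

end

theory Submission
  imports Defs
begin

text \<open>The equivalence holds separately for each \<open>s \<in> H\<close>: substituting \<open>x := x\<cdot>s\<close>
  turns the autotopism condition \<open>(x R\<^sub>s\<^sup>-\<^sup>1)(sz\<cdot>s) = (x\<cdot>z)s\<close> into the identity
  \<open>(xs\<cdot>z)s = x(sz\<cdot>s)\<close>, since \<open>R\<^sub>s\<close> is a bijection of \<open>G\<close>. The three maps lie in
  \<open>SSYM(G\<^sub>H)\<close> because translations by \<open>s \<in> H\<close> are bijections of both \<open>G\<close> and \<open>H\<close>.\<close>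

lemma loop_closed:
  assumes "loop G m e" and "x \<in> G" and "y \<in> G"
  shows "m x y \<in> G"
proof -
  have "\<forall>x\<in>G. \<forall>y\<in>G. m x y \<in> G" using assms(1) unfolding loop_def by (elim conjE)
  then show ?thesis using assms(2,3) by blast
qed

lemma loop_right_div_unique:
  assumes "loop G m e" and "a \<in> G" and "b \<in> G"
  shows "\<exists>!y. y \<in> G \<and> m y a = b"
  using assms unfolding loop_def by simp

lemma loop_left_div_unique:
  assumes "loop G m e" and "a \<in> G" and "b \<in> G"
  shows "\<exists>!x. x \<in> G \<and> m a x = b"
  using assms unfolding loop_def by simp

lemma loop_right_cancel:
  assumes L: "loop G m e" and "a \<in> G" "x \<in> G" "y \<in> G" and "m x a = m y a"
  shows "x = y"
proof -
  have "\<exists>!z. z \<in> G \<and> m z a = m x a"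
    using loop_right_div_unique[OF L \<open>a \<in> G\<close> loop_closed[OF L \<open>x \<in> G\<close> \<open>a \<in> G\<close>]] .
  then show ?thesis
    by (rule ex1E) (use \<open>x \<in> G\<close> \<open>y \<in> G\<close> \<open>m x a = m y a\<close> in metis)
qed

lemma loop_left_cancel:
  assumes L: "loop G m e" and "a \<in> G" "x \<in> G" "y \<in> G" and "m a x = m a y"
  shows "x = y"
proof -
  have "\<exists>!z. z \<in> G \<and> m a z = m a x"
    using loop_left_div_unique[OF L \<open>a \<in> G\<close> loop_closed[OF L \<open>a \<in> G\<close> \<open>x \<in> G\<close>]] .
  then show ?thesis
    by (rule ex1E) (use \<open>x \<in> G\<close> \<open>y \<in> G\<close> \<open>m a x = m a y\<close> in metis)
qed

lemma loop_Rt_bij_betw: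
  assumes L: "loop G m e" and s: "s \<in> G"
  shows "bij_betw (Rt m s) G G"
proof (rule bij_betwI')
  fix x y assume "x \<in> G" "y \<in> G"
  then show "Rt m s x = Rt m s y \<longleftrightarrow> x = y"
    using loop_right_cancel[OF L s] by (auto simp: Rt_def)
next
  fix x assume "x \<in> G"
  then show "Rt m s x \<in> G" using loop_closed[OF L _ s] by (simp add: Rt_def)
next
  fix y assume "y \<in> G"
  then show "\<exists>x\<in>G. y = Rt m s x" using loop_right_div_unique[OF L s] by (metis Rt_def)
qed

lemma loop_Lt_bij_betw:
  assumes L: "loop G m e" and s: "s \<in> G"
  shows "bij_betw (Lt m s) G G"
proof (rule bij_betwI')
  fix x y assume "x \<in> G" "y \<in> G"
  then show "Lt m s x = Lt m s y \<longleftrightarrow> x = y"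
    using loop_left_cancel[OF L s] by (auto simp: Lt_def)
next
  fix x assume "x \<in> G"
  then show "Lt m s x \<in> G" using loop_closed[OF L s] by (simp add: Lt_def)
next
  fix y assume "y \<in> G"
  then show "\<exists>x\<in>G. y = Lt m s x" using loop_left_div_unique[OF L s] by (metis Lt_def)
qed

lemma the_inv_into_image_invariant:
  assumes "inj_on f A" and "B \<subseteq> A" and "f ` B = B"
  shows "the_inv_into A f ` B = B"
proof -
  have "the_inv_into A f ` B = the_inv_into A f ` f ` B" using assms(3) by simp
  also have "\<dots> = (\<lambda>x. x) ` B"
    unfolding image_image using assms(1,2) by (intro image_cong) (auto simp: the_inv_into_f_f)
  finally show ?thesis by simp
qed

lemma subloop_translations_in_SSYM:
  assumes "loop G m e" and "subloop H G m e" and "s \<in> H"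
  shows "Rt_inv G m s \<in> SSYM G H" and "Rt m s \<circ> Lt m s \<in> SSYM G H" and "Rt m s \<in> SSYM G H"
proof -
  have HG: "H \<subseteq> G" and loop_H: "loop H m e" using assms(2) unfolding subloop_def by simp_all
  with assms(3) have "s \<in> G" by blast
  have RG: "bij_betw (Rt m s) G G" and LG: "bij_betw (Lt m s) G G"
    using loop_Rt_bij_betw[OF assms(1) \<open>s \<in> G\<close>] loop_Lt_bij_betw[OF assms(1) \<open>s \<in> G\<close>] .
  have RH: "Rt m s ` H = H" and LH: "Lt m s ` H = H"
    using loop_Rt_bij_betw[OF loop_H assms(3)] loop_Lt_bij_betw[OF loop_H assms(3)]
    by (simp_all add: bij_betw_def)
  show "Rt m s \<in> SSYM G H" using RG RH by (simp add: SSYM_def)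
  have "(Rt m s \<circ> Lt m s) ` H = H" by (simp only: image_comp[symmetric] LH RH)
  then show "Rt m s \<circ> Lt m s \<in> SSYM G H"
    using bij_betw_trans[OF LG RG] unfolding SSYM_def by blast
  have "Rt_inv G m s ` H = H"
    unfolding Rt_inv_def using the_inv_into_image_invariant[OF bij_betw_imp_inj_on[OF RG] HG RH] .
  then show "Rt_inv G m s \<in> SSYM G H"
    using bij_betw_the_inv_into[OF RG] by (simp add: SSYM_def Rt_inv_def)
qed

lemma Rt_inv_translation_S1stAUT_iff:
  assumes "loop G m e" and "subloop H G m e" and "s \<in> H"
  shows "(Rt_inv G m s, Rt m s \<circ> Lt m s, Rt m s) \<in> S1stAUT G H m \<longleftrightarrow>
    (\<forall>x\<in>G. \<forall>z\<in>G. m (m (m x s) z) s = m x (m (m s z) s))"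
proof -
  have "s \<in> G" using assms(2,3) unfolding subloop_def by blast
  then have R: "bij_betw (Rt m s) G G" by (rule loop_Rt_bij_betw[OF assms(1)])
  have Rt_inv_in: "Rt_inv G m s x \<in> G" if "x \<in> G" for x
    using bij_betw_apply[OF bij_betw_the_inv_into[OF R] that] unfolding Rt_inv_def .
  have Rt_Rt_inv: "m (Rt_inv G m s x) s = x" if "x \<in> G" for x
    using f_the_inv_into_f_bij_betw[OF R that] unfolding Rt_inv_def Rt_def .
  have Rt_inv_Rt: "Rt_inv G m s (m x s) = x" if "x \<in> G" for x
    using the_inv_into_f_f[OF bij_betw_imp_inj_on[OF R] that] unfolding Rt_inv_def Rt_def .
  have "(Rt_inv G m s, Rt m s \<circ> Lt m s, Rt m s) \<in> S1stAUT G H m \<longleftrightarrow>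
      (\<forall>y\<in>G. \<forall>z\<in>G. m (Rt_inv G m s y) (m (m s z) s) = m (m y z) s)"
    using subloop_translations_in_SSYM[OF assms] by (simp add: S1stAUT_def Rt_def Lt_def)
  also have "\<dots> \<longleftrightarrow> (\<forall>x\<in>G. \<forall>z\<in>G. m (m (m x s) z) s = m x (m (m s z) s))"
  proof (intro iffI ballI)
    fix x z assume aut: "\<forall>y\<in>G. \<forall>z\<in>G. m (Rt_inv G m s y) (m (m s z) s) = m (m y z) s"
      and "x \<in> G" "z \<in> G"
    then show "m (m (m x s) z) s = m x (m (m s z) s)"
      using aut[rule_format, OF loop_closed[OF assms(1) \<open>x \<in> G\<close> \<open>s \<in> G\<close>]]
      by (simp add: Rt_inv_Rt)
  next
    fix y z assume ident: "\<forall>x\<in>G. \<forall>z\<in>G. m (m (m x s) z) s = m x (m (m s z) s)"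
      and "y \<in> G" "z \<in> G"
    then show "m (Rt_inv G m s y) (m (m s z) s) = m (m y z) s"
      using ident[rule_format, OF Rt_inv_in] by (simp add: Rt_Rt_inv)
  qed
  finally show ?thesis .
qed

theorem theorem3p4:
  fixes G H :: "'a set" and m :: "'a \<Rightarrow> 'a \<Rightarrow> 'a" and e :: 'a
  assumes "loop G m e"
    and "subloop H G m e"
    and "H \<noteq> {e}"
  shows "(\<forall>x\<in>G. \<forall>z\<in>G. \<forall>s\<in>H. m (m (m x s) z) s = m x (m (m s z) s))
     \<longleftrightarrow> (\<forall>s\<in>H. (Rt_inv G m s, Rt m s \<circ> Lt m s, Rt m s) \<in> S1stAUT G H m)"
  using Rt_inv_translation_S1stAUT_iff[OF assms(1,2)] by blast

end
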